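(* Let $n\ge1$, $\bar M_0=\{u\in\mathbb{C}^{n+2}\mid u_1\cdots u_{n+2}=1,\ u_1+\cdots+u_{n+2}=0\}$, $\varpi:\bar M_0\to\mathbb{C}^\times$, $\varpi(u)=u_1$, and $p:\bar M_0\to\mathcal{P}^n$, $p(u)=[u_1:\cdots:u_{n+2}]$, where $\mathcal{P}^n=\{[z_1:\cdots:z_{n+2}]\in\mathbb{P}^{n+1}_{\mathbb{C}}\mid z_1+\cdots+z_{n+2}=0,\ z_i\ne0\}$. Let $U_1=\{[z_1:z_2:\cdots:z_{n+1}:1]\in\mathcal{P}^n\mid z_2,\ldots,z_{n+1}\in\mathbb{R}_{>0}\}$. Then $p^{-1}(U_1)$ consists of exactly $n+2$ connected components $U_\zeta$, indexed by the solutions $\zeta$ of $\zeta^{n+2}=(-1)^{n+1}(n+1)^{n+1}$, where $U_\zeta$ is characterized by the condition $\zeta\in\varpi(U_\zeta)$. *)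

theory Defs
  imports "HOL-Analysis.Analysis"
begin

text \<open>Points of C^(n+2) are modelled as functions nat => complex, indexed by 1..n+2
  and zero outside; the topology is the product topology (equal to the Euclidean one
  on this finite-dimensional slice).\<close>

definition Mbar0 :: "nat \<Rightarrow> (nat \<Rightarrow> complex) set" where
  "Mbar0 n = {u. (\<forall>i. i \<notin> {1..n+2} \<longrightarrow> u i = 0)
                 \<and> (\<Prod>i=1..n+2. u i) = 1 \<and> (\<Sum>i=1..n+2. u i) = 0}"

definition varpi :: "(nat \<Rightarrow> complex) \<Rightarrow> complex" where
  "varpi u = u 1"

definition preU1 :: "nat \<Rightarrow> (nat \<Rightarrow> complex) set" where
  "preU1 n = {u \<in> Mbar0 n. \<exists>c z. c \<noteq> 0 \<and> z (n+2) = 1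
       \<and> (\<forall>i\<in>{1..n+2}. z i \<noteq> 0) \<and> (\<Sum>i=1..n+2. z i) = 0
       \<and> (\<forall>i\<in>{2..n+1}. z i \<in> \<real> \<and> Re (z i) > 0)
       \<and> (\<forall>i\<in>{1..n+2}. u i = c * z i)}"

end

theory Submission
  imports Defs
begin

text \<open>A point of \<open>p\<^sup>-\<^sup>1(U\<^sub>1)\<close> is \<open>u = c (-S, t\<^sub>2, ..., t\<^sub>n\<^sub>+\<^sub>1, 1)\<close> with all
  \<open>t\<^sub>i > 0\<close>, \<open>S = 1 + \<Sum> t\<^sub>i\<close>, \<open>P = \<Prod> t\<^sub>i\<close>, and the product condition reads
  \<open>c\<^sup>n\<^sup>+\<^sup>2 S P = -1\<close>. Hence \<open>u\<^sub>1\<^sup>n\<^sup>+\<^sup>2 = (-1)\<^sup>n\<^sup>+\<^sup>1 S\<^sup>n\<^sup>+\<^sup>1 / P\<close>, so rescaling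
  \<open>u\<^sub>1\<close> to the modulus \<open>r\<close> of the roots \<open>\<zeta>\<close> gives a continuous map from \<open>p\<^sup>-\<^sup>1(U\<^sub>1)\<close> onto
  these \<open>n + 2\<close> roots. Its fibre over \<open>\<zeta>\<close> is a continuous image of the convex set of
  parameters \<open>t\<close>, hence connected, and its point with \<open>t = 1\<close> has first coordinate \<open>\<zeta>\<close>.
  A continuous map to a finite set with nonempty connected fibres has exactly these
  fibres as components.\<close>

lemma connected_of_pointwise_segments:
  fixes D :: "('a \<Rightarrow> real) set"
  assumes "\<And>s t x. s \<in> D \<Longrightarrow> t \<in> D \<Longrightarrow> x \<in> {0..1} \<Longrightarrow> (\<lambda>i. (1 - x) * s i + x * t i) \<in> D"
  shows "connected D"
proof (rule path_connected_imp_connected, unfold path_connected_def, intro ballI)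
  fix s t assume st: "s \<in> D" "t \<in> D"
  let ?g = "\<lambda>x i. (1 - x) * s i + x * t i"
  have "path ?g"
    unfolding path_def by (intro continuous_on_coordinatewise_then_product continuous_intros)
  moreover have "path_image ?g \<subseteq> D"
    using assms st by (auto simp: path_image_def)
  ultimately show "\<exists>g. path g \<and> path_image g \<subseteq> D \<and> pathstart g = s \<and> pathfinish g = t"
    by (auto simp: pathstart_def pathfinish_def)
qed

lemma components_eq_fibres:
  fixes f :: "'a::topological_space \<Rightarrow> 'b::real_normed_algebra_1"
  assumes f: "continuous_on S f" and T: "finite T" "f ` S \<subseteq> T"
    and fibre_ne: "\<And>y. y \<in> T \<Longrightarrow> {x \<in> S. f x = y} \<noteq> {}"
    and fibre_conn: "\<And>y. y \<in> T \<Longrightarrow> connected {x \<in> S. f x = y}"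
  shows "bij_betw (\<lambda>y. {x \<in> S. f x = y}) T (components S)"
proof -
  have fibre_comp: "{x \<in> S. f x = y} \<in> components S" if y: "y \<in> T" for y
    unfolding in_components_maximal
  proof (intro conjI allI impI)
    fix D assume D: "D \<noteq> {} \<and> {x \<in> S. f x = y} \<subseteq> D \<and> D \<subseteq> S \<and> connected D"
    have "f ` D \<subseteq> T"
      using D T(2) by (meson image_mono order_trans)
    then have "finite (f ` D)"
      using T(1) finite_subset by auto
    moreover have "continuous_on D f"
      using continuous_on_subset[OF f] D by auto
    ultimately have "f constant_on D"
      using continuous_finite_range_constant D by auto
    then obtain a where a: "\<forall>x\<in>D. f x = a"
      unfolding constant_on_def by auto
    obtain x where "x \<in> S" "f x = y"
      using fibre_ne[OF y] by auto
    then have "x \<in> D"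
      using D by auto
    then have "a = y"
      using a \<open>f x = y\<close> by auto
    then show "D = {x \<in> S. f x = y}"
      using D a by auto
  qed (use fibre_ne[OF y] fibre_conn[OF y] in auto)
  show ?thesis
  proof (rule bij_betw_imageI)
    show "inj_on (\<lambda>y. {x \<in> S. f x = y}) T"
    proof (rule inj_onI)
      fix y y' assume y: "y \<in> T" and eq: "{x \<in> S. f x = y} = {x \<in> S. f x = y'}"
      obtain x where "x \<in> S" "f x = y"
        using fibre_ne[OF y] by blast
      then show "y = y'"
        using eq by blast
    qed
    show "(\<lambda>y. {x \<in> S. f x = y}) ` T = components S"
    proof (intro subset_antisym subsetI)
      fix C assume C: "C \<in> components S"
      then obtain x where x: "x \<in> C" "x \<in> S"
        using in_components_nonempty in_components_subset by blast
      then have fx: "f x \<in> T"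
        using T(2) by blast
      have "C \<inter> {x' \<in> S. f x' = f x} \<noteq> {}"
        using x by blast
      then have "C = {x' \<in> S. f x' = f x}"
        using components_eq[OF C fibre_comp[OF fx]] by blast
      then show "C \<in> (\<lambda>y. {x \<in> S. f x = y}) ` T"
        using fx by blast
    qed (use fibre_comp in blast)
  qed
qed

lemma neg_quotient_power_mult_eq:
  fixes \<zeta> :: complex and \<sigma> S P k :: real
  assumes S: "S \<noteq> 0" and scale: "k * \<sigma> ^ e * P * S = S ^ e"
  shows "of_real k * ((- (\<zeta> * of_real \<sigma> / of_real S)) ^ e * of_real (S * P)) = (-1) ^ e * \<zeta> ^ e"
proof -
  have "- (\<zeta> * of_real \<sigma> / of_real S) = (-1) * (\<zeta> * of_real (\<sigma> / S))"
    by simp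
  then have power: "(- (\<zeta> * of_real \<sigma> / of_real S)) ^ e = (-1) ^ e * (\<zeta> ^ e * of_real ((\<sigma> / S) ^ e))"
    by (simp only: power_mult_distrib of_real_power)
  have "k * (\<sigma> / S) ^ e * (S * P) = (k * \<sigma> ^ e * P * S) / S ^ e"
    by (simp add: power_divide field_simps)
  also have "\<dots> = 1"
    using S by (simp only: scale) simp
  finally have one: "of_real k * (of_real ((\<sigma> / S) ^ e) * of_real (S * P)) = (1::complex)"
    by (simp only: of_real_mult[symmetric] of_real_1 mult.assoc)
  have "of_real k * ((- (\<zeta> * of_real \<sigma> / of_real S)) ^ e * of_real (S * P))
      = (-1) ^ e * \<zeta> ^ e * (of_real k * (of_real ((\<sigma> / S) ^ e) * of_real (S * P)))"
    unfolding power by (simp only: mult_ac)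
  also have "\<dots> = (-1) ^ e * \<zeta> ^ e"
    by (simp only: one mult_1_right)
  finally show ?thesis .
qed

lemma sum_split_ends:
  "(\<Sum>i=1..(n::nat)+2. f i) = f 1 + (\<Sum>i=2..n+1. f i) + (f (n+2) :: 'a::comm_monoid_add)"
proof -
  have "{1..n+2} = insert 1 (insert (n+2) {2..n+1})" by auto
  then show ?thesis by (simp add: add_ac)
qed

lemma prod_split_ends:
  "(\<Prod>i=1..(n::nat)+2. f i) = f 1 * (\<Prod>i=2..n+1. f i) * (f (n+2) :: 'a::comm_monoid_mult)"
proof -
  have "{1..n+2} = insert 1 (insert (n+2) {2..n+1})" by auto
  then show ?thesis by (simp add: mult_ac)
qed

definition pos_params :: "nat \<Rightarrow> (nat \<Rightarrow> real) set" where
  "pos_params n = {t. \<forall>i\<in>{2..n+1}. 0 < t i}"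

definition param_sum :: "nat \<Rightarrow> (nat \<Rightarrow> real) \<Rightarrow> real" where
  "param_sum n t = 1 + (\<Sum>i=2..n+1. t i)"

definition param_prod :: "nat \<Rightarrow> (nat \<Rightarrow> real) \<Rightarrow> real" where
  "param_prod n t = (\<Prod>i=2..n+1. t i)"

text \<open>The representative \<open>(z\<^sub>1, t\<^sub>2, ..., t\<^sub>n\<^sub>+\<^sub>1, 1)\<close> of a point of \<open>U\<^sub>1\<close>; the vanishing
  coordinate sum forces \<open>z\<^sub>1 = -(1 + t\<^sub>2 + ... + t\<^sub>n\<^sub>+\<^sub>1)\<close>.\<close>
definition affine_point :: "nat \<Rightarrow> (nat \<Rightarrow> real) \<Rightarrow> nat \<Rightarrow> complex" where
  "affine_point n t i =
     (if i = 1 then - of_real (param_sum n t) else if i = n + 2 then 1 else of_real (t i))"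

definition scaled_point :: "nat \<Rightarrow> complex \<Rightarrow> (nat \<Rightarrow> real) \<Rightarrow> nat \<Rightarrow> complex" where
  "scaled_point n c t i = (if i \<in> {1..n+2} then c * affine_point n t i else 0)"

lemma one_in_pos_params: "(\<lambda>_. 1) \<in> pos_params n"
  by (simp add: pos_params_def)

lemma pos_params_sum_prod_pos:
  assumes "t \<in> pos_params n"
  shows "param_sum n t > 0" "param_prod n t > 0"
proof -
  have "(\<Sum>i=2..n+1. t i) \<ge> 0"
    using assms by (intro sum_nonneg) (auto simp: pos_params_def less_imp_le)
  then show "param_sum n t > 0"
    by (simp add: param_sum_def)
  show "param_prod n t > 0"
    using assms unfolding param_prod_def pos_params_def by (intro prod_pos) auto
qed

lemma sum_affine_point: "(\<Sum>i=1..n+2. affine_point n t i) = 0"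
proof -
  have "(\<Sum>i=2..n+1. affine_point n t i) = of_real (param_sum n t - 1)"
    by (simp add: affine_point_def param_sum_def of_real_sum del: sum.cl_ivl_Suc)
  then show ?thesis
    unfolding sum_split_ends by (simp add: affine_point_def)
qed

lemma prod_affine_point:
  "(\<Prod>i=1..n+2. affine_point n t i) = - of_real (param_sum n t * param_prod n t)"
proof -
  have "(\<Prod>i=2..n+1. affine_point n t i) = of_real (param_prod n t)"
    by (simp add: affine_point_def param_prod_def of_real_prod del: prod.cl_ivl_Suc)
  then show ?thesis
    unfolding prod_split_ends by (simp add: affine_point_def)
qed

lemma scaled_point_in_preU1:
  assumes t: "t \<in> pos_params n"
    and c: "c ^ (n+2) * of_real (param_sum n t * param_prod n t) = -1"
  shows "scaled_point n c t \<in> preU1 n"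
proof -
  have "(\<Prod>i=1..n+2. scaled_point n c t i) = c ^ (n+2) * (\<Prod>i=1..n+2. affine_point n t i)"
    by (simp add: scaled_point_def prod.distrib)
  then have prod: "(\<Prod>i=1..n+2. scaled_point n c t i) = 1"
    by (simp only: prod_affine_point mult_minus_right c) simp
  have "(\<Sum>i=1..n+2. scaled_point n c t i) = c * (\<Sum>i=1..n+2. affine_point n t i)"
    by (simp add: scaled_point_def sum_distrib_left del: sum.cl_ivl_Suc)
  then have sum: "(\<Sum>i=1..n+2. scaled_point n c t i) = 0"
    by (simp only: sum_affine_point mult_zero_right)
  have "c \<noteq> 0"
    using c by auto
  moreover have "\<forall>i\<in>{1..n+2}. affine_point n t i \<noteq> 0"
  proof
    fix i :: nat assume i: "i \<in> {1..n+2}"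
    show "affine_point n t i \<noteq> 0"
    proof (cases "i = 1 \<or> i = n + 2")
      case False
      then have "0 < t i"
        using i t by (simp add: pos_params_def)
      then show ?thesis
        using False by (simp add: affine_point_def)
    qed (use pos_params_sum_prod_pos[OF t] in \<open>auto simp: affine_point_def\<close>)
  qed
  moreover have "\<forall>i\<in>{2..n+1}. affine_point n t i \<in> \<real> \<and> Re (affine_point n t i) > 0"
    using t by (auto simp: affine_point_def pos_params_def)
  ultimately have "\<exists>c' z. c' \<noteq> 0 \<and> z (n+2) = 1 \<and> (\<forall>i\<in>{1..n+2}. z i \<noteq> 0)
      \<and> (\<Sum>i=1..n+2. z i) = 0 \<and> (\<forall>i\<in>{2..n+1}. z i \<in> \<real> \<and> Re (z i) > 0)
      \<and> (\<forall>i\<in>{1..n+2}. scaled_point n c t i = c' * z i)"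
    using sum_affine_point[of n t]
    by (intro exI[of _ c] exI[of _ "affine_point n t"])
       (simp add: scaled_point_def affine_point_def del: sum.cl_ivl_Suc)
  moreover have "scaled_point n c t \<in> Mbar0 n"
    using prod sum by (simp add: Mbar0_def scaled_point_def)
  ultimately show ?thesis
    unfolding preU1_def by blast
qed

lemma preU1_obtain_scaled_point:
  assumes "u \<in> preU1 n"
  obtains c t where "t \<in> pos_params n"
    and "c ^ (n+2) * of_real (param_sum n t * param_prod n t) = -1"
    and "u = scaled_point n c t"
proof -
  obtain c z where zn: "z (n+2) = 1" and zsum: "(\<Sum>i=1..n+2. z i) = 0"
    and zpos: "\<forall>i\<in>{2..n+1}. z i \<in> \<real> \<and> Re (z i) > 0"
    and uc: "\<forall>i\<in>{1..n+2}. u i = c * z i"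
    using assms unfolding preU1_def by blast
  have uM: "u \<in> Mbar0 n"
    using assms unfolding preU1_def by blast
  define t where "t = (\<lambda>i. Re (z i))"
  have t: "t \<in> pos_params n"
    using zpos by (simp add: pos_params_def t_def)
  have z_mid: "z i = of_real (t i)" if "i \<in> {2..n+1}" for i
    using zpos that by (simp add: t_def of_real_Re)
  have "(\<Sum>i=2..n+1. z i) = of_real (param_sum n t - 1)"
    using z_mid by (simp add: param_sum_def of_real_sum del: sum.cl_ivl_Suc)
  then have "z 1 + of_real (param_sum n t - 1) + 1 = 0"
    using zsum zn by (simp only: sum_split_ends)
  then have "z 1 = - of_real (param_sum n t)"
    by (simp add: algebra_simps eq_neg_iff_add_eq_0)
  then have z: "z i = affine_point n t i" if "i \<in> {1..n+2}" for i
    using that zn z_mid by (auto simp: affine_point_def)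
  have u: "u = scaled_point n c t"
  proof
    fix i show "u i = scaled_point n c t i"
      using uc z uM by (auto simp: scaled_point_def Mbar0_def)
  qed
  have "1 = (\<Prod>i=1..n+2. scaled_point n c t i)"
    using uM u by (simp add: Mbar0_def)
  also have "\<dots> = c ^ (n+2) * (\<Prod>i=1..n+2. affine_point n t i)"
    by (simp add: scaled_point_def prod.distrib)
  also have "\<dots> = - (c ^ (n+2) * of_real (param_sum n t * param_prod n t))"
    by (simp only: prod_affine_point mult_minus_right)
  finally have "c ^ (n+2) * of_real (param_sum n t * param_prod n t) = -1"
    by (metis minus_minus)
  with t u show thesis
    using that by blast
qed

definition sheet_radius :: "nat \<Rightarrow> real" where
  "sheet_radius n = root (n+2) (real (n+1) ^ (n+1))"

definition sheet_labels :: "nat \<Rightarrow> complex set" where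
  "sheet_labels n = {\<zeta>. \<zeta> ^ (n+2) = (-1) ^ (n+1) * of_nat (n+1) ^ (n+1)}"

definition sheet_index :: "nat \<Rightarrow> (nat \<Rightarrow> complex) \<Rightarrow> complex" where
  "sheet_index n u = of_real (sheet_radius n) * (u 1 / of_real (cmod (u 1)))"

text \<open>For \<open>u\<close> over the parameter \<open>t\<close>, \<open>|u\<^sub>1|\<^sup>n\<^sup>+\<^sup>2 = S\<^sup>n\<^sup>+\<^sup>1 / P\<close>; \<open>sheet_scale n t\<close>
  is \<open>|u\<^sub>1|\<close> divided by \<open>sheet_radius n\<close>, so it equals \<open>1\<close> at \<open>t = 1\<close>.\<close>
definition sheet_scale :: "nat \<Rightarrow> (nat \<Rightarrow> real) \<Rightarrow> real" where
  "sheet_scale n t = root (n+2) ((param_sum n t / real (n+1)) ^ (n+1) / param_prod n t)"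

definition sheet_coeff :: "nat \<Rightarrow> complex \<Rightarrow> (nat \<Rightarrow> real) \<Rightarrow> complex" where
  "sheet_coeff n \<zeta> t = - (\<zeta> * of_real (sheet_scale n t) / of_real (param_sum n t))"

definition sheet_point :: "nat \<Rightarrow> complex \<Rightarrow> (nat \<Rightarrow> real) \<Rightarrow> nat \<Rightarrow> complex" where
  "sheet_point n \<zeta> t = scaled_point n (sheet_coeff n \<zeta> t) t"

lemma card_sheet_labels: "card (sheet_labels n) = n + 2"
proof -
  have "(of_nat (n+1) :: complex) \<noteq> 0"
    by (metis of_nat_eq_0_iff Suc_eq_plus1 nat.distinct(1))
  then show ?thesis
    unfolding sheet_labels_def by (intro card_nth_roots) auto
qed

lemma norm_sheet_label:
  assumes "\<zeta> \<in> sheet_labels n"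
  shows "cmod \<zeta> = sheet_radius n"
proof -
  have "cmod \<zeta> ^ (n+2) = real (n+1) ^ (n+1)"
    using arg_cong[OF assms[unfolded sheet_labels_def mem_Collect_eq], of cmod]
    by (simp only: norm_power norm_mult norm_minus_cancel norm_one power_one norm_of_nat mult_1_left)
  then show ?thesis
    unfolding sheet_radius_def by (intro real_root_pos_unique[symmetric]) auto
qed

lemma sheet_index_eq_first:
  assumes "u 1 \<in> sheet_labels n"
  shows "sheet_index n u = u 1"
proof -
  have "sheet_radius n > 0"
    by (simp add: sheet_radius_def)
  then show ?thesis
    using norm_sheet_label[OF assms] by (simp add: sheet_index_def)
qed

lemma sheet_scale_pos:
  assumes "t \<in> pos_params n"
  shows "sheet_scale n t > 0"
  using pos_params_sum_prod_pos[OF assms] by (simp add: sheet_scale_def)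

lemma sheet_scale_power:
  assumes "t \<in> pos_params n"
  shows "real (n+1) ^ (n+1) * sheet_scale n t ^ (n+2) * param_prod n t * param_sum n t
    = param_sum n t ^ (n+2)"
proof -
  have P: "param_prod n t > 0" and S: "param_sum n t > 0"
    using pos_params_sum_prod_pos[OF assms] by auto
  then have "sheet_scale n t ^ (n+2) = (param_sum n t / real (n+1)) ^ (n+1) / param_prod n t"
    unfolding sheet_scale_def by (intro real_root_pow_pos) auto
  then show ?thesis
    using P S by (simp add: power_divide)
qed

lemma sheet_coeff_power_identity:
  assumes t: "t \<in> pos_params n"
  shows "of_nat (n+1) ^ (n+1) * (sheet_coeff n \<zeta> t ^ (n+2) * of_real (param_sum n t * param_prod n t))
    = (-1) ^ (n+2) * \<zeta> ^ (n+2)"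
proof -
  have "param_sum n t \<noteq> 0"
    using pos_params_sum_prod_pos(1)[OF t] by simp
  then have "of_real (real (n+1) ^ (n+1))
      * (sheet_coeff n \<zeta> t ^ (n+2) * of_real (param_sum n t * param_prod n t))
      = (-1) ^ (n+2) * \<zeta> ^ (n+2)"
    unfolding sheet_coeff_def by (rule neg_quotient_power_mult_eq[OF _ sheet_scale_power[OF t]])
  then show ?thesis
    unfolding of_real_power of_real_of_nat_eq .
qed

lemma sheet_coeff_power_iff:
  assumes t: "t \<in> pos_params n"
  shows "sheet_coeff n \<zeta> t ^ (n+2) * of_real (param_sum n t * param_prod n t) = -1
    \<longleftrightarrow> \<zeta> \<in> sheet_labels n"
proof -
  define x k where "x = sheet_coeff n \<zeta> t ^ (n+2) * of_real (param_sum n t * param_prod n t)"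
    and "k = (of_nat (n+1) ^ (n+1) :: complex)"
  have k0: "k \<noteq> 0"
    unfolding k_def by (simp only: of_nat_power[symmetric] of_nat_eq_0_iff) simp
  have "x = -1 \<longleftrightarrow> k * x = k * (-1)"
    by (rule mult_left_cancel[OF k0, symmetric])
  also have "\<dots> \<longleftrightarrow> - ((-1) ^ (n+1) * \<zeta> ^ (n+2)) = - k"
    using sheet_coeff_power_identity[OF t, of \<zeta>] by (simp add: x_def k_def)
  also have "\<dots> \<longleftrightarrow> \<zeta> ^ (n+2) = (-1) ^ (n+1) * k"
    unfolding neg_equal_iff_equal by (metis left_minus_one_mult_self)
  finally show ?thesis
    by (simp add: x_def k_def sheet_labels_def)
qed

lemma sheet_point_in_preU1:
  assumes "\<zeta> \<in> sheet_labels n" "t \<in> pos_params n"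
  shows "sheet_point n \<zeta> t \<in> preU1 n"
  unfolding sheet_point_def
  by (rule scaled_point_in_preU1[OF assms(2) iffD2[OF sheet_coeff_power_iff[OF assms(2)] assms(1)]])

lemma sheet_point_first:
  assumes "t \<in> pos_params n"
  shows "sheet_point n \<zeta> t 1 = \<zeta> * of_real (sheet_scale n t)"
  using pos_params_sum_prod_pos[OF assms]
  by (simp add: sheet_point_def scaled_point_def sheet_coeff_def affine_point_def)

lemma sheet_index_sheet_point:
  assumes \<zeta>: "\<zeta> \<in> sheet_labels n" and t: "t \<in> pos_params n"
  shows "sheet_index n (sheet_point n \<zeta> t) = \<zeta>"
proof -
  have \<sigma>: "sheet_scale n t > 0"
    using sheet_scale_pos[OF t] .
  have r: "sheet_radius n > 0"
    by (simp add: sheet_radius_def)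
  have norm: "cmod (sheet_point n \<zeta> t 1) = sheet_radius n * sheet_scale n t"
    unfolding sheet_point_first[OF t] norm_mult norm_sheet_label[OF \<zeta>] using \<sigma> by simp
  show ?thesis
    unfolding sheet_index_def norm unfolding sheet_point_first[OF t] using \<sigma> r by simp
qed

lemma preU1_obtain_sheet_point:
  assumes "u \<in> preU1 n"
  obtains \<zeta> t where "\<zeta> \<in> sheet_labels n" "t \<in> pos_params n" "u = sheet_point n \<zeta> t"
proof -
  obtain c t where t: "t \<in> pos_params n"
    and c: "c ^ (n+2) * of_real (param_sum n t * param_prod n t) = -1"
    and u: "u = scaled_point n c t"
    using preU1_obtain_scaled_point[OF assms] .
  define \<zeta> where "\<zeta> = - (c * of_real (param_sum n t) / of_real (sheet_scale n t))"
  have "sheet_coeff n \<zeta> t = c"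
    using pos_params_sum_prod_pos[OF t] sheet_scale_pos[OF t]
    by (simp add: sheet_coeff_def \<zeta>_def)
  then show thesis
    using that[of \<zeta> t] t c u sheet_coeff_power_iff[OF t, of \<zeta>] by (simp add: sheet_point_def)
qed

definition sheet :: "nat \<Rightarrow> complex \<Rightarrow> (nat \<Rightarrow> complex) set" where
  "sheet n \<zeta> = {u \<in> preU1 n. sheet_index n u = \<zeta>}"

lemma sheet_eq_image:
  assumes "\<zeta> \<in> sheet_labels n"
  shows "sheet n \<zeta> = sheet_point n \<zeta> ` pos_params n"
proof (intro subset_antisym subsetI)
  fix u assume "u \<in> sheet n \<zeta>"
  then obtain \<zeta>' t where "\<zeta>' \<in> sheet_labels n" "t \<in> pos_params n" "u = sheet_point n \<zeta>' t"
      "sheet_index n u = \<zeta>"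
    unfolding sheet_def using preU1_obtain_sheet_point by blast
  moreover from this have "\<zeta>' = \<zeta>"
    by (metis sheet_index_sheet_point)
  ultimately show "u \<in> sheet_point n \<zeta> ` pos_params n"
    by (metis image_eqI)
qed (use assms sheet_point_in_preU1 sheet_index_sheet_point in \<open>auto simp: sheet_def\<close>)

lemma sheet_index_in_labels:
  assumes "u \<in> preU1 n"
  shows "sheet_index n u \<in> sheet_labels n"
  using assms by (elim preU1_obtain_sheet_point) (simp add: sheet_index_sheet_point)

lemma continuous_on_sheet_index: "continuous_on (preU1 n) (sheet_index n)"
proof -
  have "u 1 \<noteq> 0" if "u \<in> preU1 n" for u
    using that by (auto simp: preU1_def Mbar0_def prod_zero_iff)
  moreover have "continuous_on (preU1 n) (\<lambda>u. u 1)"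
    by (rule continuous_on_subset[OF continuous_on_product_coordinates]) simp
  ultimately show ?thesis
    unfolding sheet_index_def by (intro continuous_intros) auto
qed

lemma continuous_on_sheet_point: "continuous_on (pos_params n) (sheet_point n \<zeta>)"
proof (rule continuous_on_coordinatewise_then_product)
  fix i
  have coord: "continuous_on (pos_params n) (\<lambda>t. t j)" for j
    by (rule continuous_on_subset[OF continuous_on_product_coordinates]) simp
  have S: "continuous_on (pos_params n) (param_sum n)"
    unfolding param_sum_def by (intro continuous_intros coord)
  have P: "continuous_on (pos_params n) (param_prod n)"
    unfolding param_prod_def by (intro continuous_intros coord)
  have S0: "param_sum n t \<noteq> 0" and P0: "param_prod n t \<noteq> 0" if "t \<in> pos_params n" for t
    using pos_params_sum_prod_pos[OF that] by auto
  have "continuous_on (pos_params n) (sheet_scale n)"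
    unfolding sheet_scale_def by (intro continuous_intros S P) (auto simp: P0)
  then have c: "continuous_on (pos_params n) (sheet_coeff n \<zeta>)"
    unfolding sheet_coeff_def by (intro continuous_intros S) (auto simp: S0)
  have "continuous_on (pos_params n) (\<lambda>t. affine_point n t i)"
    unfolding affine_point_def
    by (cases "i = 1"; cases "i = n + 2") (auto intro!: continuous_intros S coord)
  then show "continuous_on (pos_params n) (\<lambda>t. sheet_point n \<zeta> t i)"
    unfolding sheet_point_def scaled_point_def
    by (cases "i \<in> {1..n+2}") (auto intro!: continuous_intros c)
qed

lemma connected_pos_params: "connected (pos_params n)"
proof (rule connected_of_pointwise_segments)
  fix s t :: "nat \<Rightarrow> real" and x :: real
  assume "s \<in> pos_params n" "t \<in> pos_params n" "x \<in> {0..1}"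
  then show "(\<lambda>i. (1 - x) * s i + x * t i) \<in> pos_params n"
    unfolding pos_params_def
    by (cases "x = 1") (auto intro!: add_pos_nonneg)
qed

lemma connected_sheet:
  assumes "\<zeta> \<in> sheet_labels n"
  shows "connected (sheet n \<zeta>)"
  unfolding sheet_eq_image[OF assms]
  by (rule connected_continuous_image[OF continuous_on_sheet_point connected_pos_params])

lemma sheet_point_base_first:
  "sheet_point n \<zeta> (\<lambda>_. 1) 1 = \<zeta>"
proof -
  have "sheet_scale n (\<lambda>_. 1) = 1"
    by (simp add: sheet_scale_def param_sum_def param_prod_def)
  then show ?thesis
    by (simp only: sheet_point_first[OF one_in_pos_params]) simp
qed

lemma bij_betw_sheet_components: "bij_betw (sheet n) (sheet_labels n) (components (preU1 n))"
  unfolding sheet_def[abs_def]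
proof (rule components_eq_fibres[OF continuous_on_sheet_index])
  show "finite (sheet_labels n)"
    using card_sheet_labels[of n] by (intro card_ge_0_finite) simp
  show "{u \<in> preU1 n. sheet_index n u = \<zeta>} \<noteq> {}" if "\<zeta> \<in> sheet_labels n" for \<zeta>
    using sheet_eq_image[OF that] one_in_pos_params by (auto simp: sheet_def)
qed (use sheet_index_in_labels connected_sheet in \<open>auto simp: sheet_def\<close>)

lemma label_in_varpi_sheet_iff:
  assumes "\<zeta> \<in> sheet_labels n" "\<zeta>' \<in> sheet_labels n"
  shows "\<zeta> \<in> varpi ` sheet n \<zeta>' \<longleftrightarrow> \<zeta>' = \<zeta>"
proof
  assume "\<zeta> \<in> varpi ` sheet n \<zeta>'"
  then show "\<zeta>' = \<zeta>"
    using sheet_index_eq_first assms(1) by (auto simp: sheet_def varpi_def)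
next
  assume "\<zeta>' = \<zeta>"
  then have "sheet_point n \<zeta> (\<lambda>_. 1) \<in> sheet n \<zeta>'"
    using assms sheet_eq_image one_in_pos_params by auto
  then show "\<zeta> \<in> varpi ` sheet n \<zeta>'"
    by (metis sheet_point_base_first varpi_def image_eqI)
qed

theorem mainTheorem12:
  fixes n :: nat
  assumes "n \<ge> 1"
  defines "Z \<equiv> {\<zeta>::complex. \<zeta> ^ (n+2) = (-1) ^ (n+1) * (of_nat (n+1)) ^ (n+1)}"
  shows "card (components (preU1 n)) = n + 2
    \<and> (\<exists>U. bij_betw U Z (components (preU1 n))
         \<and> (\<forall>\<zeta>\<in>Z. \<forall>C\<in>components (preU1 n). \<zeta> \<in> varpi ` C \<longleftrightarrow> C = U \<zeta>))"
proof -
  have Z: "Z = sheet_labels n"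
    by (simp add: Z_def sheet_labels_def)
  have bij: "bij_betw (sheet n) Z (components (preU1 n))"
    unfolding Z by (rule bij_betw_sheet_components)
  have "\<zeta> \<in> varpi ` C \<longleftrightarrow> C = sheet n \<zeta>" if \<zeta>: "\<zeta> \<in> Z" and C: "C \<in> components (preU1 n)" for \<zeta> C
  proof -
    obtain \<zeta>' where \<zeta>': "\<zeta>' \<in> Z" "C = sheet n \<zeta>'"
      using C bij by (auto simp: bij_betw_def)
    then have "C = sheet n \<zeta> \<longleftrightarrow> \<zeta>' = \<zeta>"
      using inj_on_eq_iff[OF bij_betw_imp_inj_on[OF bij]] \<zeta> by auto
    then show ?thesis
      using label_in_varpi_sheet_iff \<zeta> \<zeta>' by (simp add: Z)
  qed
  moreover have "card (components (preU1 n)) = n + 2"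
    using bij_betw_same_card[OF bij] card_sheet_labels by (simp add: Z)
  ultimately show ?thesis
    using bij by blast
qed

end
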